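(* Let $\kappa$ be a regular uncountable cardinal and $I$ an ideal on $\kappa$. If $I$ is quasinormal and prepleasant, then $I$ is pleasant, and therefore normal.
   Context: An ideal on $\kappa$ is a family of subsets of $\kappa$ closed under subsets and finite unions, which is $<\kappa$-complete and contains all singletons. $I^*=\{\kappa\setminus X: X\in I\}$. For $A\subseteq\kappa$ and $X_\alpha\subseteq\kappa$, $\bigtriangledown_{\alpha\in A}X_\alpha=\{\xi<\kappa:\exists\alpha<\xi\,(\alpha\in A\wedge \xi\in X_\alpha)\}$. $I$ is normal if $X_\alpha\in I$ for all $\alpha<\kappa$ implies $\bigtriangledown_{\alpha<\kappa}X_\alpha\in I$. $I$ is pleasant if whenever $A\in I$ and $X_\alpha\in I$ for all $\alpha$, then $\bigtriangledown_{\alpha\in A}X_\alpha\in I$. $I$ is prepleasant if for every $Q\in I$ and every sequence $\langle B_\alpha\rangle_{\alpha<\kappa}$ of bounded subsets of $\kappa$, $\bigtriangledown_{\alpha\in Q}B_\alpha\in I$. $I$ is quasinormal if for every sequence $\langle X_\alpha\rangle_{\alpha<\kappa}$ of members of $I$ there is $Q\in I^*$ with $\bigtriangledown_{\alpha\in Q}X_\alpha\in I$. *)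

theory Defs
  imports Main "HOL-Library.Equipollence"
begin

text \<open>The cardinal kappa is represented by a well-ordered type 'k whose order type is kappa:
  every proper initial segment has strictly smaller cardinality than the whole type.\<close>

definition is_cardinal_type :: "'k::wellorder itself \<Rightarrow> bool" where
  "is_cardinal_type _ \<longleftrightarrow> (\<forall>a::'k. {..<a} \<prec> (UNIV::'k set))"

definition bounded_in :: "'k::wellorder set \<Rightarrow> bool" where
  "bounded_in X \<longleftrightarrow> (\<exists>b. \<forall>x\<in>X. x < b)"

definition regular_uncountable_cardinal :: "'k::wellorder itself \<Rightarrow> bool" where
  "regular_uncountable_cardinal T \<longleftrightarrow> is_cardinal_type T \<and> uncountable (UNIV::'k set)
     \<and> (\<forall>X::'k set. X \<prec> (UNIV::'k set) \<longrightarrow> bounded_in X)"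

definition ideal_on :: "'k set set \<Rightarrow> bool" where
  "ideal_on I \<longleftrightarrow>
     (\<forall>X Y. X \<in> I \<longrightarrow> Y \<subseteq> X \<longrightarrow> Y \<in> I)
   \<and> (\<forall>X Y. X \<in> I \<longrightarrow> Y \<in> I \<longrightarrow> X \<union> Y \<in> I)
   \<and> (\<forall>F. F \<subseteq> I \<longrightarrow> F \<prec> (UNIV::'k set) \<longrightarrow> \<Union>F \<in> I)
   \<and> (\<forall>x. {x} \<in> I)"

definition dual_filter :: "'k set set \<Rightarrow> 'k set set" where
  "dual_filter I = {UNIV - X | X. X \<in> I}"

definition diag_union :: "'k::wellorder set \<Rightarrow> ('k \<Rightarrow> 'k set) \<Rightarrow> 'k set" where
  "diag_union A X = {\<xi>. \<exists>\<alpha><\<xi>. \<alpha> \<in> A \<and> \<xi> \<in> X \<alpha>}"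

definition normal_ideal :: "'k::wellorder set set \<Rightarrow> bool" where
  "normal_ideal I \<longleftrightarrow> (\<forall>X. (\<forall>\<alpha>. X \<alpha> \<in> I) \<longrightarrow> diag_union UNIV X \<in> I)"

definition pleasant :: "'k::wellorder set set \<Rightarrow> bool" where
  "pleasant I \<longleftrightarrow> (\<forall>A X. A \<in> I \<longrightarrow> (\<forall>\<alpha>. X \<alpha> \<in> I) \<longrightarrow> diag_union A X \<in> I)"

definition prepleasant :: "'k::wellorder set set \<Rightarrow> bool" where
  "prepleasant I \<longleftrightarrow> (\<forall>Q B. Q \<in> I \<longrightarrow> (\<forall>\<alpha>. bounded_in (B \<alpha>)) \<longrightarrow> diag_union Q B \<in> I)"

definition quasinormal :: "'k::wellorder set set \<Rightarrow> bool" where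
  "quasinormal I \<longleftrightarrow> (\<forall>X. (\<forall>\<alpha>. X \<alpha> \<in> I) \<longrightarrow> (\<exists>Q\<in>dual_filter I. diag_union Q X \<in> I))"

end

theory Submission
  imports Defs
begin

text \<open>
  Let \<open>A \<in> I\<close> and \<open>X\<^sub>\<alpha> \<in> I\<close>. By \<open>\<kappa>\<close>-completeness each \<open>Y\<^sub>\<beta> = \<Union>\<^sub>\<alpha>\<^sub>\<le>\<^sub>\<beta> X\<^sub>\<alpha>\<close> lies in \<open>I\<close>,
  so quasinormality yields \<open>Q \<in> I\<^sup>*\<close> with \<open>\<nabla>\<^sub>\<beta>\<^sub>\<in>\<^sub>Q Y\<^sub>\<beta> \<in> I\<close>. A set in \<open>I\<^sup>*\<close> is unbounded,
  so we may pick \<open>g \<alpha> \<in> Q\<close> with \<open>\<alpha> \<le> g \<alpha>\<close>. If \<open>\<xi> \<in> X\<^sub>\<alpha>\<close> with \<open>\<alpha> < \<xi>\<close>, \<open>\<alpha> \<in> A\<close>,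
  then either \<open>g \<alpha> < \<xi>\<close>, and \<open>\<xi> \<in> \<nabla>\<^sub>\<beta>\<^sub>\<in>\<^sub>Q Y\<^sub>\<beta>\<close>, or \<open>\<xi> \<le> g \<alpha>\<close>, and \<open>\<xi>\<close> lies in the diagonal
  union over \<open>A\<close> of the bounded sets \<open>[0, g \<alpha>]\<close>, which is in \<open>I\<close> by prepleasantness.
  Normality follows by splitting \<open>\<kappa> = Q \<union> (\<kappa> - Q)\<close>.
\<close>

lemma ideal_on_subset: "ideal_on I \<Longrightarrow> X \<in> I \<Longrightarrow> Y \<subseteq> X \<Longrightarrow> Y \<in> I"
  unfolding ideal_on_def by blast

lemma ideal_on_Un: "ideal_on I \<Longrightarrow> X \<in> I \<Longrightarrow> Y \<in> I \<Longrightarrow> X \<union> Y \<in> I"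
  unfolding ideal_on_def by blast

lemma ideal_on_Union:
  "ideal_on I \<Longrightarrow> F \<subseteq> I \<Longrightarrow> F \<prec> (UNIV::'k set) \<Longrightarrow> \<Union>F \<in> (I::'k set set)"
  unfolding ideal_on_def by blast

lemma ideal_on_singleton: "ideal_on I \<Longrightarrow> {x} \<in> I"
  unfolding ideal_on_def by blast

lemma lesspoll_UNIV_in_ideal:
  assumes "ideal_on I" and "(S::'k set) \<prec> (UNIV::'k set)"
  shows "S \<in> I"
proof -
  have "(\<lambda>x. {x}) ` S \<prec> (UNIV::'k set)"
    using image_lepoll assms(2) by (rule lesspoll_trans1)
  moreover have "(\<lambda>x. {x}) ` S \<subseteq> I"
    using ideal_on_singleton[OF assms(1)] by blast
  ultimately have "\<Union>((\<lambda>x. {x}) ` S) \<in> I"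
    using ideal_on_Union[OF assms(1)] by blast
  then show ?thesis by simp
qed

lemma cardinal_type_no_greatest:
  assumes "is_cardinal_type TYPE('k::wellorder)" and "infinite (UNIV::'k set)"
  shows "\<exists>s. (m::'k) < s"
proof (rule ccontr)
  assume "\<nexists>s. m < s"
  then have UNIV_eq: "UNIV = insert m {..<m}"
    by (auto simp: not_less intro: le_neq_trans)
  then have "infinite {..<m}"
    using assms(2) by (metis finite_insert)
  then have "insert m {..<m} \<approx> {..<m}"
    by (rule infinite_insert_eqpoll)
  then have "(UNIV::'k set) \<approx> {..<m}"
    using UNIV_eq by simp
  moreover have "{..<m} \<prec> (UNIV::'k set)"
    using assms(1) unfolding is_cardinal_type_def by blast
  ultimately have "{..<m} \<prec> {..<m}"
    by (metis lesspoll_eq_trans)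
  then show False by (simp add: lesspoll_not_refl)
qed

lemma atMost_lesspoll_UNIV:
  assumes "is_cardinal_type TYPE('k::wellorder)" and "infinite (UNIV::'k set)"
  shows "{..(b::'k)} \<prec> (UNIV::'k set)"
proof -
  obtain s where "b < s"
    using cardinal_type_no_greatest[OF assms] by blast
  then have "{..b} \<lesssim> {..<s}"
    by (intro subset_imp_lepoll) auto
  moreover have "{..<s} \<prec> (UNIV::'k set)"
    using assms(1) unfolding is_cardinal_type_def by blast
  ultimately show ?thesis by (rule lesspoll_trans1)
qed

lemma bounded_in_atMost:
  assumes "is_cardinal_type TYPE('k::wellorder)" and "infinite (UNIV::'k set)"
  shows "bounded_in {..(b::'k)}"
  using cardinal_type_no_greatest[OF assms, of b]
  unfolding bounded_in_def by (meson atMost_iff le_less_trans)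

lemma UN_atMost_in_ideal:
  fixes I :: "'k::wellorder set set" and X :: "'k \<Rightarrow> 'k set"
  assumes "is_cardinal_type TYPE('k)" and "infinite (UNIV::'k set)"
    and "ideal_on I" and "\<forall>\<alpha>. X \<alpha> \<in> I"
  shows "(\<Union>\<alpha>\<le>\<beta>. X \<alpha>) \<in> I"
proof (rule ideal_on_Union[OF assms(3)])
  show "X ` {..\<beta>} \<subseteq> I" using assms(4) by blast
  show "X ` {..\<beta>} \<prec> (UNIV::'k set)"
    by (rule lesspoll_trans1[OF image_lepoll atMost_lesspoll_UNIV[OF assms(1,2)]])
qed

lemma dual_filter_unbounded:
  fixes I :: "'k::wellorder set set"
  assumes "is_cardinal_type TYPE('k)" and "ideal_on I" and "UNIV \<notin> I"
    and "Q \<in> dual_filter I"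
  shows "\<exists>x\<in>Q. b \<le> x"
proof (rule ccontr)
  assume "\<not> (\<exists>x\<in>Q. b \<le> x)"
  then have "Q \<subseteq> {..<b}" by (auto simp: not_le)
  moreover have "{..<b} \<in> I"
    using assms(1) lesspoll_UNIV_in_ideal[OF assms(2)] unfolding is_cardinal_type_def by blast
  ultimately have "Q \<in> I" by (rule ideal_on_subset[OF assms(2), rotated])
  obtain Z where "Z \<in> I" and "Q = UNIV - Z"
    using assms(4) unfolding dual_filter_def by blast
  then have "UNIV = Z \<union> Q" and "Z \<union> Q \<in> I"
    using ideal_on_Un[OF assms(2) _ \<open>Q \<in> I\<close>] by blast+
  with assms(3) show False by simp
qed

lemma diag_union_Un: "diag_union (A \<union> B) X = diag_union A X \<union> diag_union B X"
  unfolding diag_union_def by blast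

lemma pleasant_if_quasinormal_prepleasant:
  fixes I :: "'k::wellorder set set"
  assumes card: "is_cardinal_type TYPE('k)" and inf: "infinite (UNIV::'k set)"
    and I: "ideal_on I" and "quasinormal I" and "prepleasant I"
  shows "pleasant I"
  unfolding pleasant_def
proof (intro allI impI)
  fix A :: "'k set" and X :: "'k \<Rightarrow> 'k set"
  assume A: "A \<in> I" and X: "\<forall>\<alpha>. X \<alpha> \<in> I"
  show "diag_union A X \<in> I"
  proof (cases "UNIV \<in> I")
    case True
    then show ?thesis using ideal_on_subset[OF I] by blast
  next
    case proper: False
    define Y where "Y \<beta> = (\<Union>\<alpha>\<le>\<beta>. X \<alpha>)" for \<beta>
    have "\<forall>\<beta>. Y \<beta> \<in> I"
      unfolding Y_def using UN_atMost_in_ideal[OF card inf I X] by blast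
    then obtain Q where Q: "Q \<in> dual_filter I" and QY: "diag_union Q Y \<in> I"
      using \<open>quasinormal I\<close> unfolding quasinormal_def by blast
    have "\<forall>\<alpha>. \<exists>\<beta>. \<beta> \<in> Q \<and> \<alpha> \<le> \<beta>"
      using dual_filter_unbounded[OF card I proper Q] by blast
    then obtain g where g: "\<forall>\<alpha>. g \<alpha> \<in> Q \<and> \<alpha> \<le> g \<alpha>"
      by (rule choice[THEN exE])
    have AB: "diag_union A (\<lambda>\<alpha>. {..g \<alpha>}) \<in> I"
      by (rule \<open>prepleasant I\<close>[unfolded prepleasant_def, rule_format, OF A])
        (rule bounded_in_atMost[OF card inf])
    have "diag_union A X \<subseteq> diag_union Q Y \<union> diag_union A (\<lambda>\<alpha>. {..g \<alpha>})"
    proof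
      fix \<xi> assume "\<xi> \<in> diag_union A X"
      then obtain \<alpha> where \<alpha>: "\<alpha> < \<xi>" "\<alpha> \<in> A" "\<xi> \<in> X \<alpha>"
        unfolding diag_union_def by blast
      show "\<xi> \<in> diag_union Q Y \<union> diag_union A (\<lambda>\<alpha>. {..g \<alpha>})"
      proof (cases "g \<alpha> < \<xi>")
        case True
        have "\<xi> \<in> Y (g \<alpha>)" using \<alpha> g unfolding Y_def by blast
        with True g show ?thesis unfolding diag_union_def by blast
      next
        case False
        with \<alpha> show ?thesis unfolding diag_union_def by (auto simp: not_less)
      qed
    qed
    moreover have "diag_union Q Y \<union> diag_union A (\<lambda>\<alpha>. {..g \<alpha>}) \<in> I"
      using ideal_on_Un[OF I QY AB] .
    ultimately show ?thesis
      by (rule ideal_on_subset[OF I, rotated])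
  qed
qed

lemma normal_ideal_if_pleasant_quasinormal:
  fixes I :: "'k::wellorder set set"
  assumes I: "ideal_on I" and "pleasant I" and "quasinormal I"
  shows "normal_ideal I"
  unfolding normal_ideal_def
proof (intro allI impI)
  fix X :: "'k \<Rightarrow> 'k set"
  assume X: "\<forall>\<alpha>. X \<alpha> \<in> I"
  obtain Q where "Q \<in> dual_filter I" and QX: "diag_union Q X \<in> I"
    using \<open>quasinormal I\<close>[unfolded quasinormal_def, rule_format, OF X[rule_format]] ..
  then obtain Z where Z: "Z \<in> I" and UNIV_eq: "UNIV = Q \<union> Z"
    unfolding dual_filter_def by blast
  have "diag_union UNIV X = diag_union Q X \<union> diag_union Z X"
    unfolding UNIV_eq by (rule diag_union_Un)
  moreover have "diag_union Z X \<in> I"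
    using \<open>pleasant I\<close>[unfolded pleasant_def, rule_format, OF Z X[rule_format]] .
  ultimately show "diag_union UNIV X \<in> I"
    using ideal_on_Un[OF I QX] by simp
qed

theorem corollary3p3:
  fixes I :: "'k::wellorder set set"
  assumes "regular_uncountable_cardinal TYPE('k)"
    and "ideal_on I"
    and "quasinormal I"
    and "prepleasant I"
  shows "pleasant I \<and> normal_ideal I"
proof -
  have card: "is_cardinal_type TYPE('k)" and inf: "infinite (UNIV::'k set)"
    using assms(1) countable_finite unfolding regular_uncountable_cardinal_def by blast+
  have "pleasant I"
    using pleasant_if_quasinormal_prepleasant[OF card inf assms(2-4)] .
  with assms(2,3) show ?thesis
    using normal_ideal_if_pleasant_quasinormal by blast
qed

end
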